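(* Let $\mathcal{L}$ be a distributive abstract logic and $a,b\in Expr_{\mathcal{L}}$. Then ($a\le b$ and $b\le a$) holds if and only if ($a\Vdash_{\mathcal{L}} b$ and $b\Vdash_{\mathcal{L}} a$).
   Context: An abstract logic is a triple $\mathcal{L}=(Expr_{\mathcal{L}},Th_{\mathcal{L}},\mathcal{C}_{\mathcal{L}})$ where $Expr_{\mathcal{L}}$ is a set, $Th_{\mathcal{L}}$ a non-empty set of subsets of $Expr_{\mathcal{L}}$ (theories) closed under intersections of non-empty subfamilies, and $\mathcal{C}_{\mathcal{L}}$ a set of operations on $Expr_{\mathcal{L}}$. $\mathcal{L}$ is closed under union of chains if the union of every non-empty chain of theories is a theory. A theory $T$ is prime if $T=\bigcap\mathcal{T}$ with $\mathcal{T}\subseteq Th_{\mathcal{L}}$ non-empty finite implies $T\in\mathcal{T}$; totally prime if this holds for non-empty $\mathcal{T}$ of any size. $PTh_{\mathcal{L}}$, $TPTh_{\mathcal{L}}$ denote these sets. A distributive abstract logic is one closed under union of chains with binary connectives $\vee,\wedge$ such that for all $a,b$ and all $T\in TPTh_{\mathcal{L}}$: $a\vee b\in T$ iff $a\in T$ or $b\in T$; $a\wedge b\in T$ iff $a,b\in T$. The consequence relation: for $A\cup\{a\}\subseteq Expr_{\mathcal{L}}$, $A\Vdash_{\mathcal{L}} a$ iff $a\in\bigcap\{T\in Th_{\mathcal{L}}: A\subseteq T\}$ (write $b\Vdash_{\mathcal{L}}a$ for $\{b\}\Vdash_{\mathcal{L}}a$). The order: $a\le b$ iff $S_a\subseteq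 S_b$, where $S_a=\{P\in PTh_{\mathcal{L}}: a\in P\}$. *)

theory Defs
  imports Main
begin

text \<open>An abstract logic (Expr, Th, C) over a carrier set E of expressions.
  Operations in C are given together with their arity, as functions on argument lists.\<close>

definition abstract_logic :: "'a set \<Rightarrow> 'a set set \<Rightarrow> (nat \<times> ('a list \<Rightarrow> 'a)) set \<Rightarrow> bool" where
  "abstract_logic E Th C \<longleftrightarrow>
     (\<forall>T\<in>Th. T \<subseteq> E) \<and> Th \<noteq> {} \<and>
     (\<forall>\<T>. \<T> \<subseteq> Th \<and> \<T> \<noteq> {} \<longrightarrow> \<Inter>\<T> \<in> Th) \<and>
     (\<forall>(n, f)\<in>C. \<forall>xs. length xs = n \<and> set xs \<subseteq> E \<longrightarrow> f xs \<in> E)"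

definition closed_union_chains :: "'a set set \<Rightarrow> bool" where
  "closed_union_chains Th \<longleftrightarrow>
     (\<forall>\<C>. \<C> \<subseteq> Th \<and> \<C> \<noteq> {} \<and> chain\<^sub>\<subseteq> \<C> \<longrightarrow> \<Union>\<C> \<in> Th)"

definition prime_theories :: "'a set set \<Rightarrow> 'a set set" where
  "prime_theories Th = {T \<in> Th. \<forall>\<T>. \<T> \<subseteq> Th \<and> \<T> \<noteq> {} \<and> finite \<T> \<and> T = \<Inter>\<T> \<longrightarrow> T \<in> \<T>}"

definition totally_prime_theories :: "'a set set \<Rightarrow> 'a set set" where
  "totally_prime_theories Th = {T \<in> Th. \<forall>\<T>. \<T> \<subseteq> Th \<and> \<T> \<noteq> {} \<and> T = \<Inter>\<T> \<longrightarrow> T \<in> \<T>}"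

definition distributive_logic ::
  "'a set \<Rightarrow> 'a set set \<Rightarrow> (nat \<times> ('a list \<Rightarrow> 'a)) set \<Rightarrow> ('a \<Rightarrow> 'a \<Rightarrow> 'a) \<Rightarrow> ('a \<Rightarrow> 'a \<Rightarrow> 'a) \<Rightarrow> bool" where
  "distributive_logic E Th C vee wedge \<longleftrightarrow>
     abstract_logic E Th C \<and> closed_union_chains Th \<and>
     (2, \<lambda>xs. vee (xs ! 0) (xs ! 1)) \<in> C \<and> (2, \<lambda>xs. wedge (xs ! 0) (xs ! 1)) \<in> C \<and>
     (\<forall>a\<in>E. \<forall>b\<in>E. \<forall>T\<in>totally_prime_theories Th.
        (vee a b \<in> T \<longleftrightarrow> a \<in> T \<or> b \<in> T) \<and> (wedge a b \<in> T \<longleftrightarrow> a \<in> T \<and> b \<in> T))"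

definition consequence :: "'a set \<Rightarrow> 'a set set \<Rightarrow> 'a set \<Rightarrow> 'a \<Rightarrow> bool" where
  "consequence E Th A a \<longleftrightarrow> a \<in> E \<inter> \<Inter>{T \<in> Th. A \<subseteq> T}"

definition S_set :: "'a set set \<Rightarrow> 'a \<Rightarrow> 'a set set" where
  "S_set Th a = {P \<in> prime_theories Th. a \<in> P}"

definition le_expr :: "'a set set \<Rightarrow> 'a \<Rightarrow> 'a \<Rightarrow> bool" where
  "le_expr Th a b \<longleftrightarrow> S_set Th a \<subseteq> S_set Th b"

end

theory Submission
  imports Defs
begin

text \<open>Both orders reduce to the same relation: \<open>a \<Vdash> b\<close> says every theory containing \<open>a\<close>
  contains \<open>b\<close>, while \<open>a \<le> b\<close> only quantifies over prime theories. The two agree because,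
  when unions of chains of theories are theories, any theory containing \<open>a\<close> but not \<open>b\<close> can be
  enlarged by Zorn's lemma to a maximal such theory, and such a maximal theory is prime.\<close>

lemma maximal_theory_avoiding_exists:
  assumes "closed_union_chains Th" and "T \<in> Th" "a \<in> T" "b \<notin> T"
  obtains M where "M \<in> Th" "a \<in> M" "b \<notin> M"
    and "\<And>X. X \<in> Th \<Longrightarrow> a \<in> X \<Longrightarrow> b \<notin> X \<Longrightarrow> M \<subseteq> X \<Longrightarrow> X = M"
proof -
  let ?A = "{T \<in> Th. a \<in> T \<and> b \<notin> T}"
  have "\<exists>M\<in>?A. \<forall>X\<in>?A. M \<subseteq> X \<longrightarrow> X = M"
  proof (rule subset_Zorn_nonempty)
    show "?A \<noteq> {}" using assms(2-4) by blast
    fix \<C> assume "\<C> \<noteq> {}" and "subset.chain ?A \<C>"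
    then have "\<C> \<noteq> {}" "\<C> \<subseteq> ?A" "chain\<^sub>\<subseteq> \<C>"
      by (auto simp: subset_chain_def chain_subset_def)
    moreover from this have "\<Union>\<C> \<in> Th"
      using assms(1) unfolding closed_union_chains_def by blast
    ultimately show "\<Union>\<C> \<in> ?A" by blast
  qed
  then obtain M where "M \<in> ?A" and "\<forall>X\<in>?A. M \<subseteq> X \<longrightarrow> X = M" by blast
  then show thesis by (intro that) auto
qed

lemma maximal_theory_avoiding_prime:
  assumes "M \<in> Th" "a \<in> M" "b \<notin> M"
    and max: "\<And>X. X \<in> Th \<Longrightarrow> a \<in> X \<Longrightarrow> b \<notin> X \<Longrightarrow> M \<subseteq> X \<Longrightarrow> X = M"
  shows "M \<in> prime_theories Th"
  unfolding prime_theories_def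
proof (intro CollectI conjI allI impI)
  show "M \<in> Th" by fact
  fix \<T> assume \<T>: "\<T> \<subseteq> Th \<and> \<T> \<noteq> {} \<and> finite \<T> \<and> M = \<Inter>\<T>"
  show "M \<in> \<T>"
  proof (rule ccontr)
    assume "M \<notin> \<T>"
    \<comment> \<open>every member of \<open>\<T>\<close> strictly extends \<open>M\<close> and contains \<open>a\<close>, so by maximality contains \<open>b\<close>\<close>
    then have "b \<in> X" if "X \<in> \<T>" for X
      using max[of X] \<T> that \<open>a \<in> M\<close> by blast
    then have "b \<in> M" using \<T> by blast
    with \<open>b \<notin> M\<close> show False ..
  qed
qed

lemma prime_theory_separation:
  assumes "closed_union_chains Th" and "T \<in> Th" "a \<in> T" "b \<notin> T"
  obtains P where "P \<in> prime_theories Th" "a \<in> P" "b \<notin> P"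
proof -
  obtain M where M: "M \<in> Th" "a \<in> M" "b \<notin> M"
    and max: "\<And>X. X \<in> Th \<Longrightarrow> a \<in> X \<Longrightarrow> b \<notin> X \<Longrightarrow> M \<subseteq> X \<Longrightarrow> X = M"
    using maximal_theory_avoiding_exists[OF assms] by blast
  show thesis
    by (rule that[OF maximal_theory_avoiding_prime[OF M max]]) (use M in simp_all)
qed

lemma le_expr_iff_consequence:
  assumes "closed_union_chains Th" and "b \<in> E"
  shows "le_expr Th a b \<longleftrightarrow> consequence E Th {a} b"
proof
  assume le: "le_expr Th a b"
  show "consequence E Th {a} b"
    unfolding consequence_def
  proof (rule ccontr)
    assume "b \<notin> E \<inter> \<Inter>{T \<in> Th. {a} \<subseteq> T}"
    then obtain T where "T \<in> Th" "a \<in> T" "b \<notin> T" using \<open>b \<in> E\<close> by auto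
    then obtain P where "P \<in> prime_theories Th" "a \<in> P" "b \<notin> P"
      using prime_theory_separation[OF assms(1)] by blast
    then show False using le by (auto simp: le_expr_def S_set_def)
  qed
next
  assume "consequence E Th {a} b"
  then show "le_expr Th a b"
    by (auto simp: le_expr_def S_set_def consequence_def prime_theories_def)
qed

theorem lemma3p10:
  assumes "distributive_logic E Th C vee wedge"
    and "a \<in> E" and "b \<in> E"
  shows "(le_expr Th a b \<and> le_expr Th b a) \<longleftrightarrow>
         (consequence E Th {a} b \<and> consequence E Th {b} a)"
proof -
  have "closed_union_chains Th"
    using assms(1) by (simp add: distributive_logic_def)
  then show ?thesis
    using le_expr_iff_consequence[of Th a E b] le_expr_iff_consequence[of Th b E a] assms(2,3)
    by simp
qed

end
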